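(* Let $\beta>0$. For every $x\in\mathbb N$ and $h\in(0,\beta/2)$, $$\kappa^x(h):=\widetilde{\mathbf P}_h\big(X_i>-x\ \ \forall i\in\mathbb N\big)=1-e^{-2hx}\,\frac{1-e^{h-\beta/2}}{1-e^{-h-\beta/2}}.$$ Moreover, for every $c>0$ and every $[h_1,h_2]\subset(0,\beta/2)$, $$\lim_{k\to\infty}\ \sup_{0\le x\le c\log k,\ h\in[h_1,h_2]}\big|\widetilde{\mathbf P}_h(X_i>-x,\ 1\le i\le k)-\kappa^x(h)\big|=0.$$
   Context: $c_\beta=\frac{1+e^{-\beta/2}}{1-e^{-\beta/2}}$, $\mathbf P_\beta(k)=e^{-\beta|k|/2}/c_\beta$ on $\mathbb Z$, $\mathcal L(h)=\log\sum_ke^{hk}\mathbf P_\beta(k)$ for $|h|<\beta/2$. For $|h|<\beta/2$, $\widetilde{\mathbf P}_h$ is the law under which $X=(X_i)_{i\ge0}$ is a random walk with $X_0=0$ and i.i.d. increments of law $\widetilde{\mathbf P}_h(k)=\mathbf P_\beta(k)e^{hk-\mathcal L(h)}$, $k\in\mathbb Z$. *)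

theory Defs
  imports "HOL-Probability.Probability"
begin

definition c_beta :: "real \<Rightarrow> real" where
  "c_beta \<beta> = (1 + exp (-\<beta>/2)) / (1 - exp (-\<beta>/2))"

definition P_beta :: "real \<Rightarrow> int \<Rightarrow> real" where
  "P_beta \<beta> k = exp (-\<beta> * \<bar>real_of_int k\<bar> / 2) / c_beta \<beta>"

definition L_beta :: "real \<Rightarrow> real \<Rightarrow> real" where
  "L_beta \<beta> h = ln (\<Sum>\<^sub>\<infinity>k\<in>(UNIV::int set). exp (h * real_of_int k) * P_beta \<beta> k)"

text \<open>Tilted increment law (a probability mass function on the integers for |h| < beta/2).\<close>
definition tilt_pmf :: "real \<Rightarrow> real \<Rightarrow> int pmf" where
  "tilt_pmf \<beta> h = embed_pmf (\<lambda>k. P_beta \<beta> k * exp (h * real_of_int k - L_beta \<beta> h))"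

text \<open>Law of the i.i.d. increment sequence (Delta_1, Delta_2, ...) under the tilted measure;
  the walk is X_i = Delta_1 + ... + Delta_i, X_0 = 0.\<close>
definition walk_law :: "real \<Rightarrow> real \<Rightarrow> int stream measure" where
  "walk_law \<beta> h = stream_space (measure_pmf (tilt_pmf \<beta> h))"

definition walk :: "nat \<Rightarrow> int stream \<Rightarrow> int" where
  "walk i \<omega> = (\<Sum>j<i. \<omega> !! j)"

definition kappa :: "real \<Rightarrow> nat \<Rightarrow> real \<Rightarrow> real" where
  "kappa \<beta> x h = measure (walk_law \<beta> h)
     {\<omega> \<in> space (walk_law \<beta> h). \<forall>i\<ge>1. walk i \<omega> > - int x}"

definition surv :: "real \<Rightarrow> nat \<Rightarrow> nat \<Rightarrow> real \<Rightarrow> real" where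
  "surv \<beta> k x h = measure (walk_law \<beta> h)
     {\<omega> \<in> space (walk_law \<beta> h). \<forall>i\<in>{1..k}. walk i \<omega> > - int x}"

end

theory Submission
  imports Defs
begin

(* An increment D of the tilted walk takes the value d with probability proportional to
   a^|d| r^(-d), where a = exp(-beta/2) and r = exp(-h) satisfy a < r < 1; so its law is
   geometric on each half-line.  First, E r^(2D) = 1 (Lundberg's equation).  Second, the left tail of D is geometric,
   so the overshoot below a level is memoryless.  Together they show that
   ruin t = C r^(2t), with C = (1 - a/r) / (1 - a r), satisfies the first-step equation
   ruin t = P(D <= -t) + E[ruin (t + D); D > -t] for all t >= 0.  Induction on n then traps the
   probability g_n(t) of dropping to -t or below within n steps:
   g_n(t) <= ruin t <= g_n(t) + C r^t rho^n, where rho = E r^D < 1 by the AM-GM inequality.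
   Hence kappa^x(h) = 1 - ruin x, and the error rho^n does not depend on x; it is uniform in h
   because rho decreases in h. *)

section \<open>Sums over the integers\<close>

lemma has_sum_geometric:
  fixes z :: real
  assumes "0 \<le> z" "z < 1"
  shows "((\<lambda>n. z ^ n) has_sum 1 / (1 - z)) UNIV"
  using assms by (intro sums_nonneg_imp_has_sum geometric_sums) auto

lemma has_sum_int_atLeast:
  assumes "((\<lambda>n. f (t + int n)) has_sum S) UNIV"
  shows "(f has_sum S) {t..}"
proof -
  have "bij_betw (\<lambda>n. t + int n) UNIV {t..}"
    by (rule bij_betw_byWitness[of _ "\<lambda>d. nat (d - t)"]) auto
  then show ?thesis using assms has_sum_reindex_bij_betw by blast
qed

lemma has_sum_int_atMost:
  assumes "((\<lambda>n. f (t - int n)) has_sum S) UNIV"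
  shows "(f has_sum S) {..t}"
proof -
  have "bij_betw (\<lambda>n. t - int n) UNIV {..t}"
    by (rule bij_betw_byWitness[of _ "\<lambda>d. nat (t - d)"]) auto
  then show ?thesis using assms has_sum_reindex_bij_betw by blast
qed

lemma has_sum_int_split:
  fixes f :: "int \<Rightarrow> 'a::topological_comm_monoid_add"
  assumes "((\<lambda>n. f (int n)) has_sum A) UNIV" and "((\<lambda>n. f (- 1 - int n)) has_sum B) UNIV"
  shows "(f has_sum (A + B)) UNIV"
proof -
  have "(f has_sum (A + B)) ({0..} \<union> {..-1})"
    using assms by (intro has_sum_Un_disjoint has_sum_int_atLeast has_sum_int_atMost) auto
  also have "{0..} \<union> {..-1} = (UNIV :: int set)" by auto
  finally show ?thesis .
qed

lemma has_sum_tilted_two_sided_geometric: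
  fixes a q :: real
  assumes "0 \<le> a" "a * q < 1" "a < q"
  shows "((\<lambda>d. a powi \<bar>d\<bar> * q powi d) has_sum (1 / (1 - a * q) + a / (q - a))) UNIV"
proof (rule has_sum_int_split)
  have "q > 0" using assms by linarith
  have "((\<lambda>n. (a * q) ^ n) has_sum 1 / (1 - a * q)) UNIV"
    using assms \<open>q > 0\<close> by (intro has_sum_geometric) auto
  then show "((\<lambda>n. a powi \<bar>int n\<bar> * q powi int n) has_sum 1 / (1 - a * q)) UNIV"
    by (simp add: power_mult_distrib)
  have "((\<lambda>n. a / q * (a / q) ^ n) has_sum a / q * (1 / (1 - a / q))) UNIV"
    using assms \<open>q > 0\<close> by (intro has_sum_cmult_right has_sum_geometric) auto
  also have "a / q * (1 / (1 - a / q)) = a / (q - a)"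
    using \<open>q > 0\<close> assms by (simp add: field_simps)
  finally have "((\<lambda>n. a / q * (a / q) ^ n) has_sum a / (q - a)) UNIV" .
  moreover have "a powi \<bar>- 1 - int n\<bar> * q powi (- 1 - int n) = a / q * (a / q) ^ n" for n
  proof -
    have "\<bar>- 1 - int n\<bar> = int (Suc n)" "- 1 - int n = - int (Suc n)" by simp_all
    then have "a powi \<bar>- 1 - int n\<bar> = a ^ Suc n" "q powi (- 1 - int n) = 1 / q ^ Suc n"
      by (simp_all only: power_int_minus_divide power_int_of_nat)
    then show ?thesis by (simp add: power_divide)
  qed
  ultimately show "((\<lambda>n. a powi \<bar>- 1 - int n\<bar> * q powi (- 1 - int n)) has_sum a / (q - a)) UNIV"
    by (simp only:)
qed

lemma nn_integral_count_space_has_sum: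
  fixes f :: "'a \<Rightarrow> real"
  assumes "(f has_sum S) A" and "\<And>x. x \<in> A \<Longrightarrow> 0 \<le> f x"
  shows "(\<integral>\<^sup>+x. ennreal (f x) \<partial>count_space A) = ennreal S"
proof -
  have "(\<lambda>x. norm (f x)) summable_on A"
    using assms has_sum_cong[of A "\<lambda>x. norm (f x)" f] by (auto simp: summable_on_def)
  then have "Infinite_Set_Sum.abs_summable_on f A"
    using abs_summable_equivalent by blast
  then show ?thesis
    using assms by (simp add: nn_integral_conv_infsetsum infsetsum_infsum infsumI)
qed

section \<open>First passage of a random walk below a level\<close>

lemma walk_0 [simp]: "walk 0 \<omega> = 0"
  by (simp add: walk_def)

lemma walk_Suc_Cons: "walk (Suc i) (d ## \<omega>) = d + walk i \<omega>"
  unfolding walk_def by (subst sum.lessThan_Suc_shift) simp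

lemma measurable_walk_le [measurable]:
  "Measurable.pred (stream_space (measure_pmf p)) (\<lambda>\<omega>. walk i \<omega> \<le> s)"
proof -
  have "(\<lambda>\<omega>. real_of_int (walk i \<omega>)) \<in> borel_measurable (stream_space (measure_pmf p))"
    unfolding walk_def of_int_sum by measurable
  then have "Measurable.pred (stream_space (measure_pmf p)) (\<lambda>\<omega>. real_of_int (walk i \<omega>) \<le> of_int s)"
    by measurable
  then show ?thesis by simp
qed

definition hitting_event :: "nat \<Rightarrow> int \<Rightarrow> int stream set" where
  "hitting_event n t = {\<omega>. \<exists>i\<in>{1..n}. walk i \<omega> \<le> - t}"

definition hitting_prob :: "int pmf \<Rightarrow> nat \<Rightarrow> int \<Rightarrow> real" where
  "hitting_prob p n t = measure (stream_space (measure_pmf p)) (hitting_event n t)"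

lemma space_stream_space_pmf [simp]: "space (stream_space (measure_pmf p)) = UNIV"
  by (simp add: space_stream_space)

lemma sets_hitting_event [measurable]: "hitting_event n t \<in> sets (stream_space (measure_pmf p))"
proof -
  have "hitting_event n t = {\<omega> \<in> space (stream_space (measure_pmf p)). \<exists>i\<in>{1..n}. walk i \<omega> \<le> - t}"
    by (simp add: hitting_event_def)
  also have "\<dots> \<in> sets (stream_space (measure_pmf p))" by measurable
  finally show ?thesis .
qed

lemma Cons_in_hitting_event_Suc:
  "d ## \<omega> \<in> hitting_event (Suc n) t \<longleftrightarrow> d \<le> - t \<or> \<omega> \<in> hitting_event n (t + d)"
proof -
  have "{1..Suc n} = insert 1 (Suc ` {1..n})"
    by (auto simp: image_iff)
  then have "(\<exists>i\<in>{1..Suc n}. walk i (d ## \<omega>) \<le> - t) \<longleftrightarrow>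
      walk 1 (d ## \<omega>) \<le> - t \<or> (\<exists>j\<in>{1..n}. walk (Suc j) (d ## \<omega>) \<le> - t)"
    by (simp only: Set.bex_simps(5,7))
  then show ?thesis
    by (force simp: hitting_event_def walk_Suc_Cons)
qed

lemma incseq_hitting_event: "incseq (\<lambda>n. hitting_event n t)"
  by (rule incseq_SucI) (auto simp: hitting_event_def)

lemma UN_hitting_event: "(\<Union>n. hitting_event n t) = {\<omega>. \<exists>i\<ge>1. walk i \<omega> \<le> - t}"
  by (auto simp: hitting_event_def) (meson atLeastAtMost_iff order_refl)

lemma hitting_prob_nonneg: "0 \<le> hitting_prob p n t"
  by (simp add: hitting_prob_def)

lemma hitting_prob_0 [simp]: "hitting_prob p 0 t = 0"
  by (simp add: hitting_prob_def hitting_event_def)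

lemma hitting_prob_Suc:
  "ennreal (hitting_prob p (Suc n) t) =
     (\<integral>\<^sup>+d. ennreal (if d \<le> - t then 1 else hitting_prob p n (t + d)) \<partial>measure_pmf p)"
proof -
  let ?S = "stream_space (measure_pmf p)"
  interpret S: prob_space ?S
    by (rule prob_space.prob_space_stream_space) (rule measure_pmf.prob_space_axioms)
  have "emeasure ?S (hitting_event (Suc n) t) =
      (\<integral>\<^sup>+d. emeasure ?S {\<omega>. d ## \<omega> \<in> hitting_event (Suc n) t} \<partial>measure_pmf p)"
    using prob_space.emeasure_stream_space[OF measure_pmf.prob_space_axioms sets_hitting_event]
    by simp
  also have "\<dots> = (\<integral>\<^sup>+d. ennreal (if d \<le> - t then 1 else hitting_prob p n (t + d)) \<partial>measure_pmf p)"
    using S.prob_space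
    by (intro nn_integral_cong)
       (simp add: Cons_in_hitting_event_Suc hitting_prob_def S.emeasure_eq_measure)
  finally show ?thesis
    by (simp add: hitting_prob_def S.emeasure_eq_measure)
qed

section \<open>The tilted two-sided geometric law\<close>

locale tilted_geometric =
  fixes a r :: real
  assumes a_pos: "0 < a" and a_less_r: "a < r" and r_less_1: "r < 1"
begin

lemma r_pos: "0 < r"
  using a_pos a_less_r by linarith

lemma a_less_1: "a < 1"
  using a_less_r r_less_1 by linarith

lemma a_times_r_less_1: "a * r < 1"
  using mult_strict_mono[OF a_less_1 r_less_1] a_pos r_pos by simp

lemma a_div_r_less_1: "a / r < 1"
  using a_less_r r_pos by simp

definition normaliser :: real where
  "normaliser = (1 - a / r) * (1 - a * r) / (1 - a\<^sup>2)"

lemma normaliser_pos: "0 < normaliser"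
  using a_pos a_less_1 a_times_r_less_1 a_div_r_less_1
  by (simp add: normaliser_def abs_square_less_1)

lemma has_sum_weight_moment:
  assumes "0 < s" "a * s < r" "a * r < s"
  shows "((\<lambda>d. a powi \<bar>d\<bar> / r powi d * s powi d) has_sum
    (1 / (1 - a * (s / r)) + a / (s / r - a))) UNIV"
proof -
  have "((\<lambda>d. a powi \<bar>d\<bar> * (s / r) powi d) has_sum
      (1 / (1 - a * (s / r)) + a / (s / r - a))) UNIV"
    using assms a_pos r_pos by (intro has_sum_tilted_two_sided_geometric) (auto simp: field_simps)
  then show ?thesis
    by (simp add: power_int_divide_distrib)
qed

lemma has_sum_weight: "((\<lambda>d. a powi \<bar>d\<bar> / r powi d) has_sum 1 / normaliser) UNIV"
proof -
  have "1 / (1 - a * (1 / r)) + a / (1 / r - a) = 1 / normaliser"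
    using r_pos a_div_r_less_1 a_times_r_less_1 a_less_1 a_pos
    by (simp add: normaliser_def field_simps power2_eq_square)
  then show ?thesis
    using has_sum_weight_moment[of 1] a_less_r a_times_r_less_1 by simp
qed

definition law :: "int pmf" where
  "law = embed_pmf (\<lambda>d. normaliser * (a powi \<bar>d\<bar> / r powi d))"

lemma pmf_law: "pmf law d = normaliser * (a powi \<bar>d\<bar> / r powi d)"
proof -
  have "((\<lambda>d. normaliser * (a powi \<bar>d\<bar> / r powi d)) has_sum normaliser * (1 / normaliser)) UNIV"
    by (intro has_sum_cmult_right has_sum_weight)
  then have "(\<integral>\<^sup>+d. ennreal (normaliser * (a powi \<bar>d\<bar> / r powi d)) \<partial>count_space UNIV) = 1"
    using normaliser_pos a_pos r_pos by (subst nn_integral_count_space_has_sum) auto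
  then show ?thesis
    unfolding law_def using normaliser_pos a_pos r_pos by (subst pmf_embed_pmf) auto
qed

lemma nn_integral_law:
  assumes "((\<lambda>d. pmf law d * f d) has_sum S) UNIV" and "\<And>d. 0 \<le> f d"
  shows "(\<integral>\<^sup>+d. ennreal (f d) \<partial>law) = ennreal S"
  unfolding nn_integral_measure_pmf using assms
  by (simp add: ennreal_mult'[symmetric] nn_integral_count_space_has_sum)

lemma has_sum_law_moment:
  assumes "0 < s" "a * s < r" "a * r < s"
  shows "((\<lambda>d. pmf law d * s powi d) has_sum
    normaliser * (1 / (1 - a * (s / r)) + a / (s / r - a))) UNIV"
  using has_sum_cmult_right[OF has_sum_weight_moment[OF assms], of normaliser]
  by (simp add: pmf_law mult.assoc)

lemma has_sum_law_power_r_squared: "((\<lambda>d. pmf law d * (r\<^sup>2) powi d) has_sum 1) UNIV"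
proof -
  have "a * r\<^sup>2 < r" "a * r < r\<^sup>2"
    using a_times_r_less_1 a_less_r r_pos by (simp_all add: power2_eq_square)
  moreover have "normaliser * (1 / (1 - a * (r\<^sup>2 / r)) + a / (r\<^sup>2 / r - a)) = 1"
  proof -
    have "r\<^sup>2 / r = r"
      using r_pos by (simp add: power2_eq_square)
    moreover have nz: "1 - a * r \<noteq> 0" "r - a \<noteq> 0" "1 - a\<^sup>2 \<noteq> 0" "r \<noteq> 0"
      using a_times_r_less_1 a_less_r a_pos a_less_1 r_pos by (auto simp: abs_square_eq_1)
    moreover have "1 / (1 - a * r) + a / (r - a) = r * (1 - a\<^sup>2) / ((1 - a * r) * (r - a))"
      using nz by (simp add: field_simps power2_eq_square)
    moreover have "1 - a / r = (r - a) / r"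
      using nz by (simp add: field_simps)
    ultimately show ?thesis
      by (simp add: normaliser_def)
  qed
  ultimately show ?thesis
    using has_sum_law_moment[of "r\<^sup>2"] r_pos by simp
qed

lemma pmf_law_nonpos: "d \<le> 0 \<Longrightarrow> pmf law d = normaliser * (a * r) powi (- d)"
  by (simp add: pmf_law power_int_minus_divide power_int_mult_distrib)

lemma has_sum_law_lower_tail:
  assumes "0 \<le> t" "0 < s" "a * r < s"
  shows "((\<lambda>d. pmf law d * s powi d) has_sum
    normaliser * (a * r / s) powi t / (1 - a * r / s)) {..- t}"
proof (rule has_sum_int_atMost)
  have q: "0 < a * r / s" "a * r / s < 1"
    using assms a_pos r_pos by auto
  have "pmf law (- t - int n) * s powi (- t - int n) =
      normaliser * (a * r / s) powi t * (a * r / s) ^ n" for n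
  proof -
    have "- t - int n = - (t + int n)" "0 \<le> t + int n"
      using assms by simp_all
    then have "pmf law (- t - int n) * s powi (- t - int n) = normaliser * (a * r / s) powi (t + int n)"
      by (simp only: pmf_law_nonpos neg_le_0_iff_le minus_minus power_int_minus_divide
          power_int_divide_distrib) simp
    moreover have "(a * r / s) powi (t + int n) = (a * r / s) powi t * (a * r / s) ^ n"
      using q power_int_add[of "a * r / s" t "int n"] a_pos r_pos assms(2) by simp
    ultimately show ?thesis
      by simp
  qed
  moreover have "((\<lambda>n. normaliser * (a * r / s) powi t * (a * r / s) ^ n) has_sum
      normaliser * (a * r / s) powi t * (1 / (1 - a * r / s))) UNIV"
    using q by (intro has_sum_cmult_right has_sum_geometric) auto
  ultimately show "((\<lambda>n. pmf law (- t - int n) * s powi (- t - int n)) has_sum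
      normaliser * (a * r / s) powi t / (1 - a * r / s)) UNIV"
    by simp
qed

definition decay :: real where
  "decay = (1 - a / r) * (1 - a * r) / (1 - a)\<^sup>2"

lemma has_sum_law_power_r: "((\<lambda>d. pmf law d * r powi d) has_sum decay) UNIV"
proof -
  have "a * r < r"
    using a_less_1 r_pos by simp
  moreover have "normaliser * (1 / (1 - a * (r / r)) + a / (r / r - a)) = decay"
  proof -
    have "1 - a\<^sup>2 = (1 - a) * (1 + a)" "1 - a \<noteq> 0" "1 + a \<noteq> 0" "r \<noteq> 0"
      using r_pos a_less_1 a_pos by (auto simp: power2_eq_square algebra_simps)
    moreover have "1 / (1 - a) + a / (1 - a) = (1 + a) / (1 - a)"
      by (simp add: add_divide_distrib)
    ultimately show ?thesis
      by (simp add: normaliser_def decay_def power2_eq_square)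
  qed
  ultimately show ?thesis
    using has_sum_law_moment[of r] r_pos by simp
qed

lemma decay_nonneg: "0 \<le> decay"
  using a_div_r_less_1 a_times_r_less_1 by (simp add: decay_def)

lemma decay_less_1: "decay < 1"
proof -
  have "0 < a * (r - 1)\<^sup>2 / r"
    using a_pos r_pos r_less_1 by simp
  then have "(1 - a / r) * (1 - a * r) < (1 - a)\<^sup>2"
    using r_pos by (simp add: field_simps power2_eq_square)
  then show ?thesis
    using a_less_1 by (simp add: decay_def)
qed

lemma decay_mono:
  assumes "r \<le> r'" and "r' < 1"
  shows "decay \<le> tilted_geometric.decay a r'"
proof -
  have "tilted_geometric a r'"
    using assms a_pos a_less_r by unfold_locales auto
  have numerator: "(1 - a / x) * (1 - a * x) = 1 + a\<^sup>2 - a * (x + 1 / x)" if "0 < x" for x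
    using that by (simp add: field_simps power2_eq_square)
  have "r' + 1 / r' \<le> r + 1 / r"
  proof -
    have "0 \<le> (r' - r) * (1 - r * r') / (r * r')"
      using assms r_pos mult_mono[of r 1 r' 1] by (intro divide_nonneg_pos mult_nonneg_nonneg) auto
    then show ?thesis
      using assms r_pos by (simp add: field_simps)
  qed
  then have "(1 - a / r) * (1 - a * r) \<le> (1 - a / r') * (1 - a * r')"
    using numerator[of r] numerator[of r'] assms r_pos a_pos by (simp add: mult_left_mono)
  then show ?thesis
    unfolding decay_def tilted_geometric.decay_def[OF \<open>tilted_geometric a r'\<close>]
    by (rule divide_right_mono) simp
qed

definition ruin_const :: real where
  "ruin_const = (1 - a / r) / (1 - a * r)"

definition ruin :: "int \<Rightarrow> real" where
  "ruin t = ruin_const * (r\<^sup>2) powi t"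

lemma ruin_const_pos: "0 < ruin_const"
  using a_div_r_less_1 a_times_r_less_1 by (simp add: ruin_const_def)

lemma ruin_const_le_1: "ruin_const \<le> 1"
proof -
  have "a * r * r \<le> a * 1"
    using a_pos r_pos r_less_1 mult_mono[of r 1 r 1] by (simp add: mult.assoc mult_left_mono)
  then have "a * r \<le> a / r"
    using r_pos by (simp add: field_simps)
  then show ?thesis
    using a_times_r_less_1 by (simp add: ruin_const_def)
qed

lemma ruin_nonneg: "0 \<le> ruin t"
  using ruin_const_pos r_pos by (simp add: ruin_def)

lemma has_sum_ruin_step:
  assumes "0 \<le> t"
  shows "((\<lambda>d. pmf law d * (if d \<le> - t then 1 else ruin (t + d))) has_sum ruin t) UNIV"
proof -
  define f where "f d = pmf law d * (r\<^sup>2) powi d" for d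
  define P where "P = normaliser * (a * r) powi t / (1 - a * r)"
  define T where "T = normaliser * (a / r) powi t / (1 - a / r)"
  have tail_prob: "((\<lambda>d. if d \<le> - t then pmf law d else 0) has_sum P) UNIV"
    using has_sum_law_lower_tail[OF assms, of 1] a_times_r_less_1
    by (subst has_sum_cong_neutral[where T = "{..- t}"]) (auto simp: P_def)
  have "a * r / r\<^sup>2 = a / r"
    using r_pos by (simp add: power2_eq_square)
  then have tail_f: "((\<lambda>d. if d \<le> - t then f d else 0) has_sum T) UNIV"
    using has_sum_law_lower_tail[OF assms, of "r\<^sup>2"] a_less_r r_pos
    by (subst has_sum_cong_neutral[where T = "{..- t}"])
       (auto simp: T_def f_def power2_eq_square)
  have "((\<lambda>d. (if d \<le> - t then pmf law d else 0) +
        ruin_const * (r\<^sup>2) powi t * (f d + - (if d \<le> - t then f d else 0))) has_sum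
      P + ruin_const * (r\<^sup>2) powi t * (1 + - T)) UNIV"
    using has_sum_law_power_r_squared unfolding f_def[symmetric]
    by (intro has_sum_add has_sum_cmult_right has_sum_uminusI tail_prob tail_f)
  moreover have "(if d \<le> - t then pmf law d else 0) +
      ruin_const * (r\<^sup>2) powi t * (f d + - (if d \<le> - t then f d else 0)) =
      pmf law d * (if d \<le> - t then 1 else ruin (t + d))" for d
    using r_pos by (simp add: f_def ruin_def power_int_add)
  moreover have "ruin_const * (r\<^sup>2) powi t * T = P"
  proof -
    have "(r\<^sup>2) powi t * (a / r) powi t = (a * r) powi t"
      using r_pos by (simp add: power_int_mult_distrib[symmetric] power2_eq_square ac_simps)
    then show ?thesis
      using a_less_r a_div_r_less_1 a_times_r_less_1 by (simp add: ruin_const_def T_def P_def)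
  qed
  ultimately show ?thesis
    by (simp add: ruin_def algebra_simps)
qed

lemma nn_integral_ruin_step:
  assumes "0 \<le> t"
  shows "(\<integral>\<^sup>+d. ennreal (if d \<le> - t then 1 else ruin (t + d)) \<partial>law) = ennreal (ruin t)"
  using has_sum_ruin_step[OF assms] ruin_nonneg by (intro nn_integral_law) auto

lemma nn_integral_power_r: "(\<integral>\<^sup>+d. ennreal (r powi d) \<partial>law) = ennreal decay"
  using has_sum_law_power_r r_pos by (intro nn_integral_law) auto

lemma hitting_prob_bounds:
  assumes "0 \<le> t"
  shows "hitting_prob law n t \<le> ruin t \<and>
    ruin t \<le> hitting_prob law n t + ruin_const * r powi t * decay ^ n"
  using assms
proof (induction n arbitrary: t)
  case 0
  have "(r\<^sup>2) powi t \<le> r powi t"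
    using 0 r_pos r_less_1 power_int_le_one[of r t]
    by (simp add: power2_eq_square power_int_mult_distrib mult_left_le)
  then show ?case
    using ruin_nonneg ruin_const_pos by (simp add: ruin_def)
next
  case (Suc n)
  define G where "G d = (if d \<le> - t then 1 else hitting_prob law n (t + d))" for d
  define \<Phi> where "\<Phi> d = (if d \<le> - t then 1 else ruin (t + d))" for d
  define c where "c = ruin_const * r powi t * decay ^ n"
  have c_nonneg: "0 \<le> c"
    using ruin_const_pos r_pos decay_nonneg by (simp add: c_def)
  have G_nonneg: "0 \<le> G d" for d
    by (simp add: G_def hitting_prob_nonneg)
  have G_le_\<Phi>: "G d \<le> \<Phi> d" and \<Phi>_le: "\<Phi> d \<le> G d + c * r powi d" for d
    using Suc.IH[of "t + d"] r_pos ruin_const_pos decay_nonneg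
    by (auto simp: G_def \<Phi>_def c_def power_int_add algebra_simps)
  have upper: "ennreal (hitting_prob law (Suc n) t) \<le> ennreal (ruin t)"
    unfolding hitting_prob_Suc nn_integral_ruin_step[OF Suc.prems, symmetric]
      G_def[symmetric] \<Phi>_def[symmetric]
    using G_le_\<Phi> by (intro nn_integral_mono ennreal_leI)
  have lower: "ennreal (ruin t) \<le> ennreal (hitting_prob law (Suc n) t + c * decay)"
  proof -
    have "ennreal (ruin t) \<le> (\<integral>\<^sup>+d. ennreal (G d) + ennreal c * ennreal (r powi d) \<partial>law)"
      unfolding nn_integral_ruin_step[OF Suc.prems, symmetric] \<Phi>_def[symmetric]
      using \<Phi>_le c_nonneg G_nonneg r_pos
      by (intro nn_integral_mono) (simp flip: ennreal_plus ennreal_mult add: ennreal_leI)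
    also have "\<dots> = ennreal (hitting_prob law (Suc n) t) + ennreal c * ennreal decay"
      by (simp add: nn_integral_add nn_integral_cmult hitting_prob_Suc G_def nn_integral_power_r)
    also have "\<dots> = ennreal (hitting_prob law (Suc n) t + c * decay)"
      using c_nonneg decay_nonneg hitting_prob_nonneg by (simp add: ennreal_plus ennreal_mult)
    finally show ?thesis .
  qed
  have "0 \<le> hitting_prob law (Suc n) t + c * decay"
    using c_nonneg decay_nonneg hitting_prob_nonneg by simp
  then show ?case
    using upper lower ruin_nonneg ennreal_le_iff by (auto simp: c_def algebra_simps)
qed

lemma hitting_prob_tendsto_ruin:
  assumes "0 \<le> t"
  shows "(\<lambda>n. hitting_prob law n t) \<longlonglongrightarrow> ruin t"
proof (rule tendsto_sandwich)
  have "(\<lambda>n. ruin t - ruin_const * r powi t * decay ^ n) \<longlonglongrightarrow> ruin t - ruin_const * r powi t * 0"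
    using decay_nonneg decay_less_1 by (intro tendsto_intros LIMSEQ_power_zero) auto
  then show "(\<lambda>n. ruin t - ruin_const * r powi t * decay ^ n) \<longlonglongrightarrow> ruin t"
    by simp
  show "\<forall>\<^sub>F n in sequentially. ruin t - ruin_const * r powi t * decay ^ n \<le> hitting_prob law n t"
    using hitting_prob_bounds[OF assms] by (auto simp: algebra_simps)
  show "\<forall>\<^sub>F n in sequentially. hitting_prob law n t \<le> ruin t"
    using hitting_prob_bounds[OF assms] by auto
qed simp

lemma prob_ever_below_eq_ruin:
  assumes "0 \<le> t"
  shows "measure (stream_space law) {\<omega>. \<exists>i\<ge>1. walk i \<omega> \<le> - t} = ruin t"
proof -
  interpret prob_space "stream_space law"
    by (rule prob_space.prob_space_stream_space) (rule measure_pmf.prob_space_axioms)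
  have "(\<lambda>n. hitting_prob law n t) \<longlonglongrightarrow> measure (stream_space law) (\<Union>n. hitting_event n t)"
    unfolding hitting_prob_def using incseq_hitting_event by (intro finite_Lim_measure_incseq) auto
  then show ?thesis
    using hitting_prob_tendsto_ruin[OF assms] LIMSEQ_unique by (simp add: UN_hitting_event)
qed

lemma ruin_minus_hitting_prob:
  assumes "0 \<le> t"
  shows "0 \<le> ruin t - hitting_prob law n t" and "ruin t - hitting_prob law n t \<le> decay ^ n"
proof -
  have "ruin_const * r powi t \<le> 1 * 1"
    using ruin_const_pos ruin_const_le_1 r_pos r_less_1 assms
    by (intro mult_mono power_int_le_one) auto
  then have "ruin_const * r powi t * decay ^ n \<le> decay ^ n"
    using decay_nonneg mult_right_mono[of _ 1 "decay ^ n"] by simp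
  then show "0 \<le> ruin t - hitting_prob law n t" "ruin t - hitting_prob law n t \<le> decay ^ n"
    using hitting_prob_bounds[OF assms, of n] by auto
qed

end

section \<open>The tilted walk\<close>

lemma tilted_geometric_exp:
  assumes "0 < h" and "h < \<beta> / 2"
  shows "tilted_geometric (exp (- \<beta> / 2)) (exp (- h))"
  using assms by unfold_locales auto

lemma c_beta_pos: "0 < \<beta> \<Longrightarrow> 0 < c_beta \<beta>"
  unfolding c_beta_def by (intro divide_pos_pos add_pos_pos) auto

lemma tilt_pmf_eq_law:
  assumes "0 < h" and "h < \<beta> / 2"
  shows "tilt_pmf \<beta> h = tilted_geometric.law (exp (- \<beta> / 2)) (exp (- h))"
proof -
  interpret G: tilted_geometric "exp (- \<beta> / 2)" "exp (- h)"
    using tilted_geometric_exp[OF assms] .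
  have c_pos: "0 < c_beta \<beta>"
    using assms by (intro c_beta_pos) simp
  have weight: "exp (h * of_int k) * P_beta \<beta> k =
      exp (- \<beta> / 2) powi \<bar>k\<bar> / exp (- h) powi k / c_beta \<beta>" for k
    by (simp add: P_beta_def exp_power_int exp_minus field_simps)
  have "((\<lambda>k. exp (h * of_int k) * P_beta \<beta> k) has_sum 1 / G.normaliser / c_beta \<beta>) UNIV"
    unfolding weight by (intro has_sum_divide_const G.has_sum_weight)
  then have L: "L_beta \<beta> h = ln (1 / G.normaliser / c_beta \<beta>)"
    by (simp add: L_beta_def infsumI)
  have tilt: "P_beta \<beta> k * exp (h * of_int k - L_beta \<beta> h) = pmf G.law k" for k
  proof -
    have "P_beta \<beta> k * exp (h * of_int k - L_beta \<beta> h) =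
        exp (h * of_int k) * P_beta \<beta> k * c_beta \<beta> * G.normaliser"
      using G.normaliser_pos c_pos by (simp add: L exp_diff)
    also have "\<dots> = G.normaliser * (exp (- \<beta> / 2) powi \<bar>k\<bar> / exp (- h) powi k)"
      using c_pos unfolding weight by simp
    finally show ?thesis
      unfolding G.pmf_law .
  qed
  have "(\<integral>\<^sup>+k. ennreal (pmf G.law k) \<partial>count_space UNIV) = 1"
    by (simp add: nn_integral_pmf measure_pmf.emeasure_space_1[simplified])
  then show ?thesis
    unfolding tilt_pmf_def tilt by (intro pmf_eqI) (simp add: pmf_embed_pmf)
qed

lemma kappa_eq_one_minus_ruin:
  assumes "0 < h" and "h < \<beta> / 2"
  shows "kappa \<beta> x h = 1 - tilted_geometric.ruin (exp (- \<beta> / 2)) (exp (- h)) (int x)"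
proof -
  interpret G: tilted_geometric "exp (- \<beta> / 2)" "exp (- h)"
    using tilted_geometric_exp[OF assms] .
  interpret S: prob_space "stream_space G.law"
    by (rule prob_space.prob_space_stream_space) (rule measure_pmf.prob_space_axioms)
  let ?U = "\<Union>n. hitting_event n (int x)"
  have "{\<omega> \<in> space (stream_space G.law). \<forall>i\<ge>1. walk i \<omega> > - int x} = space (stream_space G.law) - ?U"
    by (auto simp: UN_hitting_event not_le)
  then have "kappa \<beta> x h = S.prob (space (stream_space G.law) - ?U)"
    unfolding kappa_def walk_law_def tilt_pmf_eq_law[OF assms] by (rule arg_cong)
  also have "\<dots> = 1 - S.prob ?U"
    by (rule S.prob_compl) measurable
  also have "S.prob ?U = G.ruin (int x)"
    unfolding UN_hitting_event by (rule G.prob_ever_below_eq_ruin) simp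
  finally show ?thesis .
qed

lemma kappa_closed_form:
  assumes "0 < h" and "h < \<beta> / 2"
  shows "kappa \<beta> x h = 1 - exp (-2 * h * real x) * ((1 - exp (h - \<beta>/2)) / (1 - exp (-h - \<beta>/2)))"
proof -
  have "(exp (- h))\<^sup>2 powi int x = exp (- h) ^ (2 * x)"
    by (simp add: power_mult)
  also have "\<dots> = exp (-2 * h * real x)"
    by (simp flip: exp_of_nat_mult)
  finally have "(exp (- h))\<^sup>2 powi int x = exp (-2 * h * real x)" .
  moreover have "exp (- \<beta> / 2) / exp (- h) = exp (h - \<beta> / 2)"
    and "exp (- \<beta> / 2) * exp (- h) = exp (- h - \<beta> / 2)"
    by (simp_all flip: exp_diff exp_add)
  ultimately show ?thesis
    using tilted_geometric_exp[OF assms]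
    by (simp add: kappa_eq_one_minus_ruin[OF assms] tilted_geometric.ruin_def
        tilted_geometric.ruin_const_def)
qed

lemma surv_eq_one_minus_hitting_prob:
  assumes "0 < h" and "h < \<beta> / 2"
  shows "surv \<beta> k x h = 1 - hitting_prob (tilted_geometric.law (exp (- \<beta> / 2)) (exp (- h))) k (int x)"
proof -
  let ?M = "stream_space (tilted_geometric.law (exp (- \<beta> / 2)) (exp (- h)))"
  interpret S: prob_space ?M
    by (rule prob_space.prob_space_stream_space) (rule measure_pmf.prob_space_axioms)
  have "{\<omega> \<in> space ?M. \<forall>i\<in>{1..k}. walk i \<omega> > - int x} = space ?M - hitting_event k (int x)"
    by (auto simp: hitting_event_def not_le)
  then have "surv \<beta> k x h = S.prob (space ?M - hitting_event k (int x))"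
    unfolding surv_def walk_law_def tilt_pmf_eq_law[OF assms] by (rule arg_cong)
  also have "\<dots> = 1 - S.prob (hitting_event k (int x))"
    by (rule S.prob_compl) measurable
  finally show ?thesis
    by (simp add: hitting_prob_def)
qed

lemma abs_surv_minus_kappa_le:
  assumes "0 < h1" and "h1 \<le> h" and "h < \<beta> / 2"
  shows "\<bar>surv \<beta> k x h - kappa \<beta> x h\<bar> \<le> tilted_geometric.decay (exp (- \<beta> / 2)) (exp (- h1)) ^ k"
proof -
  have h: "0 < h" "h < \<beta> / 2"
    using assms by auto
  interpret G: tilted_geometric "exp (- \<beta> / 2)" "exp (- h)"
    using tilted_geometric_exp[OF h] .
  have "surv \<beta> k x h - kappa \<beta> x h = G.ruin (int x) - hitting_prob G.law k (int x)"
    by (simp add: surv_eq_one_minus_hitting_prob[OF h] kappa_eq_one_minus_ruin[OF h])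
  moreover have "G.decay ^ k \<le> tilted_geometric.decay (exp (- \<beta> / 2)) (exp (- h1)) ^ k"
    using assms G.decay_nonneg by (intro power_mono G.decay_mono) auto
  ultimately show ?thesis
    using G.ruin_minus_hitting_prob[of "int x" k] by simp
qed

lemma tendsto_SUP_abs_zero:
  fixes f :: "nat \<Rightarrow> 'a \<Rightarrow> real"
  assumes "\<forall>\<^sub>F k in sequentially. S k \<noteq> {}"
    and "\<And>k p. p \<in> S k \<Longrightarrow> \<bar>f k p\<bar> \<le> g k"
    and "g \<longlonglongrightarrow> 0"
  shows "(\<lambda>k. SUP p\<in>S k. \<bar>f k p\<bar>) \<longlonglongrightarrow> 0"
proof (rule tendsto_sandwich[OF _ _ tendsto_const assms(3)])
  have bdd: "bdd_above ((\<lambda>p. \<bar>f k p\<bar>) ` S k)" for k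
    using assms(2) by (intro bdd_aboveI2) auto
  show "\<forall>\<^sub>F k in sequentially. 0 \<le> (SUP p\<in>S k. \<bar>f k p\<bar>)"
    using assms(1) by eventually_elim (use bdd in \<open>auto intro: cSUP_upper2\<close>)
  show "\<forall>\<^sub>F k in sequentially. (SUP p\<in>S k. \<bar>f k p\<bar>) \<le> g k"
    using assms(1) by eventually_elim (use assms(2) in \<open>auto intro: cSUP_least\<close>)
qed

lemma tendsto_SUP_abs_surv_minus_kappa:
  assumes "0 \<le> c" and "0 < h1" and "h1 \<le> h2" and "h2 < \<beta> / 2"
  shows "(\<lambda>k::nat. SUP p\<in>{(x::nat, h::real). real x \<le> c * ln (real k) \<and> h1 \<le> h \<and> h \<le> h2}.
    \<bar>surv \<beta> k (fst p) (snd p) - kappa \<beta> (fst p) (snd p)\<bar>) \<longlonglongrightarrow> 0"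
proof (rule tendsto_SUP_abs_zero)
  interpret G: tilted_geometric "exp (- \<beta> / 2)" "exp (- h1)"
    using assms by (intro tilted_geometric_exp) auto
  have "\<forall>\<^sub>F k in sequentially.
      (0, h1) \<in> {(x::nat, h::real). real x \<le> c * ln (real k) \<and> h1 \<le> h \<and> h \<le> h2}"
    using eventually_ge_at_top[of 1] by eventually_elim (use assms in auto)
  then show "\<forall>\<^sub>F k in sequentially.
      {(x::nat, h::real). real x \<le> c * ln (real k) \<and> h1 \<le> h \<and> h \<le> h2} \<noteq> {}"
    by (rule eventually_mono) blast
  show "\<bar>surv \<beta> k (fst p) (snd p) - kappa \<beta> (fst p) (snd p)\<bar> \<le> G.decay ^ k"
    if "p \<in> {(x::nat, h::real). real x \<le> c * ln (real k) \<and> h1 \<le> h \<and> h \<le> h2}" for k p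
    using that assms by (intro abs_surv_minus_kappa_le) auto
  show "(\<lambda>k. G.decay ^ k) \<longlonglongrightarrow> 0"
    using G.decay_nonneg G.decay_less_1 by (intro LIMSEQ_power_zero) auto
qed

theorem mainTheorem8:
  fixes \<beta> :: real
  assumes "\<beta> > 0"
  shows "(\<forall>(x::nat) (h::real). 0 < h \<and> h < \<beta>/2 \<longrightarrow>
            kappa \<beta> x h = 1 - exp (-2 * h * real x) *
              ((1 - exp (h - \<beta>/2)) / (1 - exp (-h - \<beta>/2))))
       \<and> (\<forall>(c::real) (h1::real) (h2::real). c > 0 \<and> 0 < h1 \<and> h1 \<le> h2 \<and> h2 < \<beta>/2 \<longrightarrow>
            (\<lambda>k::nat. SUP p\<in>{(x::nat, h::real). real x \<le> c * ln (real k) \<and> h1 \<le> h \<and> h \<le> h2}.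
                \<bar>surv \<beta> k (fst p) (snd p) - kappa \<beta> (fst p) (snd p)\<bar>) \<longlonglongrightarrow> 0)"
  using kappa_closed_form tendsto_SUP_abs_surv_minus_kappa by auto

end
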